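(* Let $\mathcal{L}=\langle \mathbb{M},\mathbb{E},\mathbb{P},\ell\rangle$ be a proposition conserving model lattice, let $F$ be a finite set of plans (foils), and let $\mathcal{M}_H,\mathcal{M}_i\in\mathbb{M}$ with $\mathcal{M}_H\sqsubseteq\mathcal{M}_i$. If $E\subseteq\mathbb{P}$ is an explanation for $\mathcal{M}_i$ and $F$, then $E$ is also an explanation for $\mathcal{M}_H$ and $F$.
   Context: A planning model is $\mathcal{M}=\langle P,S,A,I,G\rangle$: $P$ a finite set of propositions, $S$ a set of states with each $s\in S$ identified with a subset $s\subseteq P$, $A$ a set of actions, $I\in S$ the initial state, $G\subseteq P$ the goal. Each action $a$ has a precondition set $\mathrm{prec}_a$ and add/delete effects $e_a^+,e_a^-$; $a(s)=(s\cup e_a^+)\setminus e_a^-$ if $\mathrm{prec}_a\subseteq s$, and $a(s)=s$ otherwise. A plan $\pi=\langle a_1,\dots,a_n\rangle$ is valid in $\mathcal{M}$, written $\pi(I)\models_{\mathcal{M}}G$, if $\pi(I)\supseteq G$. The model induces a transition system whose nodes are states and whose edges $s_1\xrightarrow{a}s_2$ are the valid transitions. For $\Lambda\subseteq P$, $f_\Lambda(s)=s\setminus\Lambda$ and $[S]_{f_\Lambda}=\{f_\Lambda(s):s\in S\}$. A model $\mathcal{M}'=\langle P',S',A',I',G'\rangle$ is an abstraction of $\mathcal{M}$ w.r.t. $\Lambda$, written $\mathcal{M}'=[\mathcal{M}]_{f_\Lambda}$, if $P'=P\setminus\Lambda$, $S'=[S]_{f_\Lambda}$, $I'=f_\Lambda(I)$,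 $G'=f_\Lambda(G)$, and for every transition $s_1\xrightarrow{a}s_2$ of $\mathcal{M}$ there is a transition $(s_1\setminus\Lambda)\xrightarrow{a}(s_2\setminus\Lambda)$ of $\mathcal{M}'$ (abstract models may have non-deterministic effects). Write $\mathcal{M}\sqsubseteq\mathcal{M}'$ if $\mathcal{M}'=[\mathcal{M}]_{f_\Lambda}$ for some $\Lambda$. Abstraction functions are assumed commutative and idempotent. A model lattice for $\mathcal{M}^\#$ is $\mathcal{L}=\langle\mathbb{M},\mathbb{E},\mathbb{P},\ell\rangle$ with $\mathcal{M}^\#\in\mathbb{M}$, $\mathcal{M}^\#\sqsubseteq\mathcal{M}'$ for all $\mathcal{M}'\in\mathbb{M}$, and each edge $(\mathcal{M}_i,\mathcal{M}_j)\in\mathbb{E}$ has a label $\ell(\mathcal{M}_i,\mathcal{M}_j)=p\in\mathbb{P}$ with $[\mathcal{M}_i]_{f_p}=\mathcal{M}_j$. The concretization $\gamma_p(\mathcal{M})$ is the $\mathcal{M}'$ with $(\mathcal{M}',\mathcal{M})\in\mathbb{E}$ and $\ell(\mathcal{M}',\mathcal{M})=p$; for $E\subseteq\mathbb{P}$, $\gamma_E(\mathcal{M})$ is the result of applying the concretizations for all $p\in E$. The lattice is proposition conserving if for every $\mathcal{M}\in\mathbb{M}$ and every $p\in\mathbb{P}$ not among the propositions of $\mathcal{M}$ there is $\mathcal{M}'\in\mathbb{M}$ with $(\mathcal{M}',\mathcal{M})\in\mathbb{E}$ and label $p$. For a model $\mathcal{M}_H\in\mathbb{M}$ and a set of plans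 $F$, a set $E\subseteq\mathbb{P}$ is an explanation if for all $\pi\in F$, $\pi$ is not valid in $\gamma_E(\mathcal{M}_H)$, i.e. $\pi(I_{\gamma_E(\mathcal{M}_H)})\not\models_{\gamma_E(\mathcal{M}_H)}G_{\gamma_E(\mathcal{M}_H)}$. *)

theory Defs
  imports Main
begin

record ('p, 'a) planning_model =
  pm_props  :: "'p set"
  pm_states :: "'p set set"
  pm_acts   :: "'a set"
  pm_prec   :: "'a \<Rightarrow> 'p set"
  pm_add    :: "'a \<Rightarrow> 'p set"
  pm_del    :: "'a \<Rightarrow> 'p set"
  pm_init   :: "'p set"
  pm_goal   :: "'p set"

definition apply_act :: "('p, 'a) planning_model \<Rightarrow> 'a \<Rightarrow> 'p set \<Rightarrow> 'p set" where
  "apply_act \<Pi> a s =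
     (if pm_prec \<Pi> a \<subseteq> s then (s \<union> pm_add \<Pi> a) - pm_del \<Pi> a else s)"

definition wf_planning_model :: "('p, 'a) planning_model \<Rightarrow> bool" where
  "wf_planning_model \<Pi> \<longleftrightarrow>
     finite (pm_props \<Pi>) \<and>
     pm_states \<Pi> \<subseteq> Pow (pm_props \<Pi>) \<and>
     pm_init \<Pi> \<in> pm_states \<Pi> \<and>
     pm_goal \<Pi> \<subseteq> pm_props \<Pi> \<and>
     (\<forall>s\<in>pm_states \<Pi>. \<forall>a\<in>pm_acts \<Pi>. apply_act \<Pi> a s \<in> pm_states \<Pi>)"

record ('p, 'a) model =
  props  :: "'p set"
  states :: "'p set set"
  acts   :: "'a set"
  trans  :: "('p set \<times> 'a \<times> 'p set) set"
  init   :: "'p set"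
  goal   :: "'p set"

definition ts_of :: "('p, 'a) planning_model \<Rightarrow> ('p, 'a) model" where
  "ts_of \<Pi> = \<lparr> props = pm_props \<Pi>, states = pm_states \<Pi>, acts = pm_acts \<Pi>,
      trans = {(s, a, apply_act \<Pi> a s) | s a. s \<in> pm_states \<Pi> \<and> a \<in> pm_acts \<Pi>},
      init = pm_init \<Pi>, goal = pm_goal \<Pi> \<rparr>"

fun reaches :: "('p, 'a) model \<Rightarrow> 'a list \<Rightarrow> 'p set \<Rightarrow> 'p set \<Rightarrow> bool" where
  "reaches M [] s s' \<longleftrightarrow> s' = s"
| "reaches M (a # \<pi>) s s' \<longleftrightarrow> (\<exists>t. (s, a, t) \<in> trans M \<and> reaches M \<pi> t s')"

definition plan_valid :: "('p, 'a) model \<Rightarrow> 'a list \<Rightarrow> bool" where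
  "plan_valid M \<pi> \<longleftrightarrow> (\<exists>s. reaches M \<pi> (init M) s \<and> goal M \<subseteq> s)"

definition abstr :: "'p set \<Rightarrow> ('p, 'a) model \<Rightarrow> ('p, 'a) model" where
  "abstr \<Lambda> M = \<lparr> props = props M - \<Lambda>,
      states = (\<lambda>s. s - \<Lambda>) ` states M,
      acts = acts M,
      trans = (\<lambda>(s1, a, s2). (s1 - \<Lambda>, a, s2 - \<Lambda>)) ` trans M,
      init = init M - \<Lambda>,
      goal = goal M - \<Lambda> \<rparr>"

definition less_abstract :: "('p, 'a) model \<Rightarrow> ('p, 'a) model \<Rightarrow> bool" where
  "less_abstract M M' \<longleftrightarrow> (\<exists>\<Lambda>. M' = abstr \<Lambda> M)"

definition model_lattice ::
  "('p, 'a) model \<Rightarrow> ('p, 'a) model set \<Rightarrow> (('p, 'a) model \<times> ('p, 'a) model) set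
   \<Rightarrow> 'p set \<Rightarrow> (('p, 'a) model \<times> ('p, 'a) model \<Rightarrow> 'p) \<Rightarrow> bool" where
  "model_lattice Msharp MM EE PP lbl \<longleftrightarrow>
     (\<exists>\<Pi>. wf_planning_model \<Pi> \<and> Msharp = ts_of \<Pi>) \<and>
     Msharp \<in> MM \<and>
     (\<forall>M'\<in>MM. less_abstract Msharp M') \<and>
     EE \<subseteq> MM \<times> MM \<and>
     (\<forall>(Mi, Mj)\<in>EE. Mi \<noteq> Mj \<and> lbl (Mi, Mj) \<in> PP \<and> abstr {lbl (Mi, Mj)} Mi = Mj)"

definition prop_conserving ::
  "('p, 'a) model set \<Rightarrow> (('p, 'a) model \<times> ('p, 'a) model) set
   \<Rightarrow> 'p set \<Rightarrow> (('p, 'a) model \<times> ('p, 'a) model \<Rightarrow> 'p) \<Rightarrow> bool" where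
  "prop_conserving MM EE PP lbl \<longleftrightarrow>
     (\<forall>M\<in>MM. \<forall>p\<in>PP. p \<notin> props M \<longrightarrow>
        (\<exists>M'\<in>MM. (M', M) \<in> EE \<and> lbl (M', M) = p))"

text \<open>Concretization gamma_p(M): the M' with an edge (M', M) labelled p
  (M itself if there is no such edge, e.g. if p is already a proposition of M).\<close>
definition concretize ::
  "(('p, 'a) model \<times> ('p, 'a) model) set \<Rightarrow> (('p, 'a) model \<times> ('p, 'a) model \<Rightarrow> 'p)
   \<Rightarrow> 'p \<Rightarrow> ('p, 'a) model \<Rightarrow> ('p, 'a) model" where
  "concretize EE lbl p M =
     (if \<exists>M'. (M', M) \<in> EE \<and> lbl (M', M) = p
      then (THE M'. (M', M) \<in> EE \<and> lbl (M', M) = p) else M)"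

text \<open>gamma_E(M): results of applying gamma_p for all p in E (in any order).\<close>
inductive concretize_set ::
  "(('p, 'a) model \<times> ('p, 'a) model) set \<Rightarrow> (('p, 'a) model \<times> ('p, 'a) model \<Rightarrow> 'p)
   \<Rightarrow> 'p set \<Rightarrow> ('p, 'a) model \<Rightarrow> ('p, 'a) model \<Rightarrow> bool"
  for EE lbl where
  empty: "concretize_set EE lbl {} M M"
| insert: "concretize_set EE lbl E M M1 \<Longrightarrow> p \<notin> E \<Longrightarrow>
           concretize_set EE lbl (insert p E) M (concretize EE lbl p M1)"

definition is_explanation ::
  "(('p, 'a) model \<times> ('p, 'a) model) set \<Rightarrow> 'p set \<Rightarrow> (('p, 'a) model \<times> ('p, 'a) model \<Rightarrow> 'p)
   \<Rightarrow> ('p, 'a) model \<Rightarrow> 'a list set \<Rightarrow> 'p set \<Rightarrow> bool" where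
  "is_explanation EE PP lbl MH F E \<longleftrightarrow>
     E \<subseteq> PP \<and> finite E \<and>
     (\<forall>M'. concretize_set EE lbl E MH M' \<longrightarrow> (\<forall>\<pi>\<in>F. \<not> plan_valid M' \<pi>))"

end

theory Submission imports Defs begin

text \<open>Every model of a model lattice is an abstraction of the most concrete model \<open>M\<^sup>#\<close>, and
  since the states of \<open>M\<^sup>#\<close> only contain its own propositions, such an abstraction is determined
  by the propositions it keeps. An edge of the lattice therefore adds exactly one proposition,
  and in a proposition conserving lattice \<open>\<gamma>\<^sub>E(M)\<close> is the unique lattice model with propositions
  \<open>props M \<union> E\<close>. As \<open>M\<^sub>H \<sqsubseteq> M\<^sub>i\<close> gives \<open>props M\<^sub>i \<subseteq> props M\<^sub>H\<close>, the model \<open>\<gamma>\<^sub>E(M\<^sub>i)\<close> is an abstraction of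
  \<open>\<gamma>\<^sub>E(M\<^sub>H)\<close>; abstraction preserves plan validity, so every foil invalid in \<open>\<gamma>\<^sub>E(M\<^sub>i)\<close> is invalid
  in \<open>\<gamma>\<^sub>E(M\<^sub>H)\<close> as well.\<close>

lemma props_abstr [simp]: "props (abstr \<Lambda> M) = props M - \<Lambda>"
  by (simp add: abstr_def)

lemma abstr_abstr: "abstr A (abstr B M) = abstr (A \<union> B) M"
  unfolding abstr_def by (auto simp: image_image case_prod_beta Diff_Un Int_commute set_diff_eq)

lemma less_abstract_props_subset: "less_abstract M M' \<Longrightarrow> props M' \<subseteq> props M"
  unfolding less_abstract_def by auto

lemma reaches_abstr: "reaches M \<pi> s s' \<Longrightarrow> reaches (abstr \<Lambda> M) \<pi> (s - \<Lambda>) (s' - \<Lambda>)"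
proof (induction \<pi> arbitrary: s)
  case Nil
  then show ?case by simp
next
  case (Cons a \<pi>)
  then obtain t where t: "(s, a, t) \<in> trans M" "reaches M \<pi> t s'" by auto
  have "(s - \<Lambda>, a, t - \<Lambda>) \<in> trans (abstr \<Lambda> M)"
    unfolding abstr_def using t(1) by (auto intro!: image_eqI[where x = "(s, a, t)"])
  then show ?case using Cons.IH[OF t(2)] by auto
qed

lemma plan_valid_abstr: "plan_valid M \<pi> \<Longrightarrow> plan_valid (abstr \<Lambda> M) \<pi>"
  unfolding plan_valid_def
  by (metis Diff_mono order_refl reaches_abstr abstr_def model.select_convs(5,6))

definition supported_by_props :: "('p, 'a) model \<Rightarrow> bool" where
  "supported_by_props M \<longleftrightarrow>
     (\<forall>s\<in>states M. s \<subseteq> props M) \<and> init M \<subseteq> props M \<and> goal M \<subseteq> props M \<and>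
     (\<forall>(s, a, t)\<in>trans M. s \<subseteq> props M \<and> t \<subseteq> props M)"

lemma supported_by_props_ts_of:
  assumes "wf_planning_model \<Pi>"
  shows "supported_by_props (ts_of \<Pi>)"
proof -
  have "pm_states \<Pi> \<subseteq> Pow (pm_props \<Pi>)" "pm_init \<Pi> \<in> pm_states \<Pi>" "pm_goal \<Pi> \<subseteq> pm_props \<Pi>"
    "\<And>s a. s \<in> pm_states \<Pi> \<Longrightarrow> a \<in> pm_acts \<Pi> \<Longrightarrow> apply_act \<Pi> a s \<in> pm_states \<Pi>"
    using assms unfolding wf_planning_model_def by blast+
  then show ?thesis unfolding supported_by_props_def ts_of_def by auto
qed

lemma abstr_Int_props:
  assumes "supported_by_props M"
  shows "abstr \<Lambda> M = abstr (\<Lambda> \<inter> props M) M"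
proof -
  have diff_eq: "s - \<Lambda> = s - (\<Lambda> \<inter> props M)" if "s \<subseteq> props M" for s
    using that by blast
  have "(\<lambda>s. s - \<Lambda>) ` states M = (\<lambda>s. s - (\<Lambda> \<inter> props M)) ` states M"
    using assms diff_eq unfolding supported_by_props_def by (intro image_cong) auto
  moreover have "(\<lambda>(s, a, t). (s - \<Lambda>, a, t - \<Lambda>)) ` trans M
      = (\<lambda>(s, a, t). (s - (\<Lambda> \<inter> props M), a, t - (\<Lambda> \<inter> props M))) ` trans M"
    using assms diff_eq unfolding supported_by_props_def by (intro image_cong) auto
  ultimately show ?thesis
    using assms diff_eq unfolding supported_by_props_def abstr_def by auto
qed

lemma model_lattice_eq_abstr_props:
  assumes "model_lattice Msharp MM EE PP lbl" and "M \<in> MM"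
  shows "M = abstr (props Msharp - props M) Msharp"
proof -
  obtain \<Pi> where "wf_planning_model \<Pi>" and sharp: "Msharp = ts_of \<Pi>"
    using assms(1) unfolding model_lattice_def by blast
  then have supp: "supported_by_props Msharp"
    by (simp add: supported_by_props_ts_of)
  obtain \<Lambda> where M: "M = abstr \<Lambda> Msharp"
    using assms unfolding model_lattice_def less_abstract_def by blast
  also have "\<dots> = abstr (\<Lambda> \<inter> props Msharp) Msharp"
    using supp by (rule abstr_Int_props)
  also have "\<Lambda> \<inter> props Msharp = props Msharp - props M"
    using M by auto
  finally show ?thesis .
qed

lemma model_lattice_eq_if_props_eq:
  assumes "model_lattice Msharp MM EE PP lbl" and "M1 \<in> MM" and "M2 \<in> MM"
    and "props M1 = props M2"
  shows "M1 = M2"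
  using assms model_lattice_eq_abstr_props by metis

lemma model_lattice_eq_abstr_of_props_subset:
  assumes lat: "model_lattice Msharp MM EE PP lbl" and "M1 \<in> MM" and "M2 \<in> MM"
    and "props M1 \<subseteq> props M2"
  shows "M1 = abstr (props M2 - props M1) M2"
proof -
  have "props M2 \<subseteq> props Msharp"
    using model_lattice_eq_abstr_props[OF lat \<open>M2 \<in> MM\<close>] by (metis Diff_subset props_abstr)
  then have "(props M2 - props M1) \<union> (props Msharp - props M2) = props Msharp - props M1"
    using assms(4) by blast
  then show ?thesis
    using model_lattice_eq_abstr_props[OF lat] assms(2,3) by (metis abstr_abstr)
qed

lemma model_lattice_edge_props:
  assumes lat: "model_lattice Msharp MM EE PP lbl" and edge: "(M', M) \<in> EE"
  shows "M' \<in> MM" and "props M' = insert (lbl (M', M)) (props M)"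
    and "lbl (M', M) \<notin> props M"
proof -
  have "M' \<in> MM" "M \<in> MM" "M' \<noteq> M" and M: "M = abstr {lbl (M', M)} M'"
    using lat edge unfolding model_lattice_def by fastforce+
  then show "M' \<in> MM" by simp
  have props_M: "props M = props M' - {lbl (M', M)}"
    using M by (metis props_abstr)
  moreover have "lbl (M', M) \<in> props M'"
  proof (rule ccontr)
    assume "lbl (M', M) \<notin> props M'"
    then have "props M' = props M"
      using props_M by simp
    then show False
      using model_lattice_eq_if_props_eq[OF lat \<open>M' \<in> MM\<close> \<open>M \<in> MM\<close>] \<open>M' \<noteq> M\<close> by blast
  qed
  ultimately show "props M' = insert (lbl (M', M)) (props M)"
    by blast
  show "lbl (M', M) \<notin> props M"
    using props_M by simp
qed

lemma concretize_edge:
  assumes lat: "model_lattice Msharp MM EE PP lbl"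
    and edge: "(M', M) \<in> EE" "lbl (M', M) = p"
  shows "concretize EE lbl p M = M'"
proof -
  have "M2 = M'" if "(M2, M) \<in> EE" "lbl (M2, M) = p" for M2
    using that edge model_lattice_edge_props[OF lat] model_lattice_eq_if_props_eq[OF lat] by metis
  then have "\<exists>!M2. (M2, M) \<in> EE \<and> lbl (M2, M) = p"
    using edge by blast
  then show ?thesis
    unfolding concretize_def using edge by (auto intro: the1_equality)
qed

lemma concretize_set_exists: "finite E \<Longrightarrow> \<exists>M'. concretize_set EE lbl E M M'"
proof (induction rule: finite_induct)
  case empty
  show ?case by (blast intro: concretize_set.empty)
next
  case (insert p E)
  then show ?case by (blast intro: concretize_set.insert)
qed

lemma concretize_set_props:
  assumes lat: "model_lattice Msharp MM EE PP lbl" and cons: "prop_conserving MM EE PP lbl"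
    and "concretize_set EE lbl E M M'" and "M \<in> MM" and "E \<subseteq> PP"
  shows "M' \<in> MM \<and> props M' = props M \<union> E"
  using assms(3-)
proof (induction rule: concretize_set.induct)
  case (empty M)
  then show ?case by simp
next
  case (insert E M M1 p)
  then have M1: "M1 \<in> MM" "props M1 = props M \<union> E" and "p \<in> PP"
    by auto
  show ?case
  proof (cases "p \<in> props M1")
    case True
    then have "\<nexists>M'. (M', M1) \<in> EE \<and> lbl (M', M1) = p"
      using model_lattice_edge_props(3)[OF lat] by blast
    then have "concretize EE lbl p M1 = M1"
      unfolding concretize_def by auto
    then show ?thesis using M1 True by auto
  next
    case False
    then obtain M' where edge: "M' \<in> MM" "(M', M1) \<in> EE" "lbl (M', M1) = p"
      using cons M1(1) \<open>p \<in> PP\<close> unfolding prop_conserving_def by blast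
    then show ?thesis
      using concretize_edge[OF lat edge(2,3)] model_lattice_edge_props[OF lat edge(2)] M1 by auto
  qed
qed

theorem proposition1:
  fixes Msharp MH Mi :: "('p, 'a) model"
    and MM :: "('p, 'a) model set"
    and EE :: "(('p, 'a) model \<times> ('p, 'a) model) set"
    and PP :: "'p set"
    and lbl :: "('p, 'a) model \<times> ('p, 'a) model \<Rightarrow> 'p"
    and F :: "'a list set"
    and E :: "'p set"
  assumes "model_lattice Msharp MM EE PP lbl"
    and "prop_conserving MM EE PP lbl"
    and "finite F"
    and "MH \<in> MM" and "Mi \<in> MM"
    and "less_abstract MH Mi"
    and "is_explanation EE PP lbl Mi F E"
  shows "is_explanation EE PP lbl MH F E"
proof -
  have E: "E \<subseteq> PP" "finite E"
    and invalid_i: "\<And>Mi'. concretize_set EE lbl E Mi Mi' \<Longrightarrow> \<forall>\<pi>\<in>F. \<not> plan_valid Mi' \<pi>"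
    using assms(7) unfolding is_explanation_def by auto
  obtain Mi' where Mi': "concretize_set EE lbl E Mi Mi'"
    using concretize_set_exists[OF E(2)] by blast
  have "\<forall>\<pi>\<in>F. \<not> plan_valid MH' \<pi>" if MH': "concretize_set EE lbl E MH MH'" for MH'
  proof -
    have "MH' \<in> MM" "Mi' \<in> MM" "props Mi' \<subseteq> props MH'"
      using concretize_set_props[OF assms(1,2) MH' assms(4) E(1)]
        concretize_set_props[OF assms(1,2) Mi' assms(5) E(1)]
        less_abstract_props_subset[OF assms(6)] by auto
    then have "Mi' = abstr (props MH' - props Mi') MH'"
      using model_lattice_eq_abstr_of_props_subset[OF assms(1)] by blast
    then show ?thesis
      using invalid_i[OF Mi'] plan_valid_abstr by metis
  qed
  then show ?thesis
    using E unfolding is_explanation_def by blast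
qed

end
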